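(* Let $d\ge 2$ and let $0\le p<q<p_c$. Then for each $\boldsymbol{x}\in\mathbb{R}^d$, \[ \mu_p(\boldsymbol{x})-\mu_q(\boldsymbol{x})\ \ge\ \frac{\mu_q(\boldsymbol{x})}{1-q}\,(q-p). \]
   Context: Bernoulli first-passage percolation on the hypercubic lattice $\mathbb{L}^d=(\mathbb{Z}^d,\mathbb{E}^d)$, $d\ge2$: the passage times $\{t(e)\}_{e\in\mathbb{E}^d}$ are independent with $P_p(t(e)=0)=p$ and $P_p(t(e)=1)=1-p$; $E_p$ denotes expectation under $P_p$. For a self-avoiding lattice path $\gamma$, $t(\gamma)=\sum_{e\in\gamma}t(e)$. For $\boldsymbol{x}\in\mathbb{R}^d$ let $\boldsymbol{x}'$ be the unique point of $\mathbb{Z}^d$ with $\boldsymbol{x}\in\boldsymbol{x}'+[0,1)^d$, and define the first-passage time $T(\boldsymbol{x},\boldsymbol{y})=\inf_{\gamma:\boldsymbol{x}'\to\boldsymbol{y}'}t(\gamma)$ (infimum over self-avoiding paths from $\boldsymbol{x}'$ to $\boldsymbol{y}'$). With $\boldsymbol{O}$ the origin, the time constant is $\mu_p(\boldsymbol{x})=\lim_{n\to\infty}E_p[T(\boldsymbol{O},n\boldsymbol{x})]/n=\inf_{n\ge1}E_p[T(\boldsymbol{O},n\boldsymbol{x})]/n$ for $\boldsymbol{x}\in\mathbb{Z}^d$, extended (as is known) to a seminorm on $\mathbb{R}^d$. $p_c=p_c(d)$ is the infimum of those $p\in[0,1]$ for which there exists (a.s.) an infinite self-avoiding path of edges $e$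 with $t(e)=0$, i.e. the critical probability of bond percolation on $\mathbb{Z}^d$. *)

theory Defs
  imports "HOL-Probability.Probability"
begin

text \<open>Hypercubic lattice Z^d, d = CARD('n). Vertices are integer vectors.\<close>

type_synonym 'n vertex = "int ^ 'n"
type_synonym 'n edge = "'n vertex set"
type_synonym 'n config = "'n edge \<Rightarrow> bool"
  \<comment> \<open>omega e = True means t(e) = 0, omega e = False means t(e) = 1\<close>

definition adj :: "'n::finite vertex \<Rightarrow> 'n vertex \<Rightarrow> bool" where
  "adj u v \<longleftrightarrow> (\<Sum>i\<in>UNIV. \<bar>u $ i - v $ i\<bar>) = 1"

definition lattice_edges :: "'n::finite edge set" where
  "lattice_edges = {{u, v} | u v. adj u v}"

definition FPP :: "real \<Rightarrow> ('n::finite) config measure" where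
  "FPP p = PiM lattice_edges (\<lambda>_. measure_pmf (bernoulli_pmf p))"

definition tval :: "'n::finite config \<Rightarrow> 'n edge \<Rightarrow> real" where
  "tval \<omega> e = (if \<omega> e then 0 else 1)"

definition saw_path :: "'n::finite vertex \<Rightarrow> 'n vertex \<Rightarrow> 'n vertex list \<Rightarrow> bool" where
  "saw_path u v vs \<longleftrightarrow> vs \<noteq> [] \<and> hd vs = u \<and> last vs = v \<and> distinct vs \<and>
     (\<forall>i < length vs - 1. adj (vs ! i) (vs ! (i + 1)))"

definition path_time :: "'n::finite config \<Rightarrow> 'n vertex list \<Rightarrow> real" where
  "path_time \<omega> vs = (\<Sum>i < length vs - 1. tval \<omega> {vs ! i, vs ! (i + 1)})"

definition lat :: "real ^ 'n::finite \<Rightarrow> 'n vertex" where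
  "lat x = (\<chi> i. \<lfloor>x $ i\<rfloor>)"

definition passage_time :: "'n::finite config \<Rightarrow> real ^ 'n \<Rightarrow> real ^ 'n \<Rightarrow> real" where
  "passage_time \<omega> x y = Inf (path_time \<omega> ` {vs. saw_path (lat x) (lat y) vs})"

definition time_const :: "real \<Rightarrow> real ^ 'n::finite \<Rightarrow> real" where
  "time_const p x =
     lim (\<lambda>n::nat. (\<integral>\<omega>. passage_time \<omega> 0 (real n *\<^sub>R x) \<partial>(FPP p :: 'n config measure)) / real n)"

definition percolates :: "'n::finite config \<Rightarrow> bool" where
  "percolates \<omega> \<longleftrightarrow> (\<exists>f :: nat \<Rightarrow> 'n vertex. inj f \<and>
      (\<forall>k. adj (f k) (f (Suc k)) \<and> \<omega> {f k, f (Suc k)}))"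

definition p_crit :: "'n::finite itself \<Rightarrow> real" where
  "p_crit _ = Inf {p \<in> {0..1}. AE \<omega> in (FPP p :: 'n config measure). percolates \<omega>}"

end

theory Submission
  imports Defs
begin

text \<open>
  Write \<open>r = (q - p) / (1 - p)\<close>, so that \<open>q = p + (1 - p) r\<close>. A Bernoulli(\<open>q\<close>) configuration
  is then the edgewise join \<open>\<omega> \<or> \<eta>\<close> of independent Bernoulli(\<open>p\<close>) and Bernoulli(\<open>r\<close>)
  configurations. Fix \<open>\<omega>\<close> and a self-avoiding path that is optimal for \<open>\<omega>\<close>: each of its
  edges with passage time 1 keeps time 1 in the join with probability \<open>1 - r\<close>, so integrating
  first over \<open>\<eta>\<close> gives \<open>E\<^sub>q T(u, v) \<le> (1 - r) E\<^sub>p T(u, v)\<close>. Dividing by \<open>n\<close> and letting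
  \<open>n \<rightarrow> \<infinity>\<close> yields \<open>\<mu>\<^sub>q \<le> (1 - q) / (1 - p) \<mu>\<^sub>p\<close>, which rearranges to the claim. The limit
  defining \<open>\<mu>\<close> exists by Fekete's lemma, because translation invariance and the triangle
  inequality make \<open>n \<mapsto> E T(0, n x)\<close> subadditive up to the rounding error \<open>d\<close>.

  For \<open>q \<ge> 1\<close> every edge is open, \<open>\<mu>\<^sub>q = 0\<close>,
  and the claim reduces to \<open>\<mu>\<^sub>p \<ge> 0\<close>.
\<close>

section \<open>Self-avoiding paths and passage times\<close>

lemma Nats_Inf_mem:
  fixes A :: "real set"
  assumes "A \<subseteq> \<nat>" "A \<noteq> {}"
  shows "Inf A \<in> A"
proof -
  define B where "B = {n::nat. real n \<in> A}"
  have "B \<noteq> {}"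
    using assms by (auto simp: B_def elim!: Nats_cases)
  then have "Inf B \<in> B" by (rule Inf_nat_def1)
  have "Inf A = real (Inf B)"
  proof (rule cInf_eq_minimum)
    show "real (Inf B) \<in> A" using \<open>Inf B \<in> B\<close> by (simp add: B_def)
    fix a assume "a \<in> A"
    then obtain k where "a = real k" "k \<in> B"
      using assms(1) by (auto simp: B_def elim!: Nats_cases)
    then show "real (Inf B) \<le> a" by (simp add: cInf_lower)
  qed
  with \<open>Inf B \<in> B\<close> show ?thesis by (simp add: B_def)
qed

fun lattice_walk :: "'n::finite vertex list \<Rightarrow> bool" where
  "lattice_walk [] \<longleftrightarrow> False"
| "lattice_walk [a] \<longleftrightarrow> True"
| "lattice_walk (a # b # r) \<longleftrightarrow> adj a b \<and> lattice_walk (b # r)"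

lemma lattice_walk_iff_adj_nth:
  "lattice_walk vs \<longleftrightarrow> vs \<noteq> [] \<and> (\<forall>i < length vs - 1. adj (vs ! i) (vs ! (i + 1)))"
proof (induction vs rule: lattice_walk.induct)
  case (3 a b r)
  have "(\<forall>i < length (a # b # r) - 1. adj ((a # b # r) ! i) ((a # b # r) ! (i + 1))) \<longleftrightarrow>
        adj a b \<and> (\<forall>i < length (b # r) - 1. adj ((b # r) ! i) ((b # r) ! (i + 1)))"
    by (auto simp: less_Suc_eq_0_disj)
  with 3 show ?case by simp
qed auto

lemma saw_path_iff: "saw_path u v vs \<longleftrightarrow> lattice_walk vs \<and> distinct vs \<and> hd vs = u \<and> last vs = v"
  unfolding saw_path_def lattice_walk_iff_adj_nth by blast

lemma lattice_walk_append:
  "lattice_walk (xs @ y # ys) \<longleftrightarrow> lattice_walk (xs @ [y]) \<and> lattice_walk (y # ys)"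
  by (induction xs rule: induct_list012) auto

lemma path_time_simps [simp]:
  "path_time \<omega> [] = 0"
  "path_time \<omega> [a] = 0"
  "path_time \<omega> (a # b # r) = tval \<omega> {a, b} + path_time \<omega> (b # r)"
  by (simp_all add: path_time_def sum.lessThan_Suc_shift del: sum.lessThan_Suc)

lemma path_time_append:
  "path_time \<omega> (xs @ y # ys) = path_time \<omega> (xs @ [y]) + path_time \<omega> (y # ys)"
  by (induction xs rule: induct_list012) auto

lemma path_time_nonneg: "0 \<le> path_time \<omega> vs"
  unfolding path_time_def tval_def by (simp add: sum_nonneg)

lemma path_time_le_length: "path_time \<omega> vs \<le> real (length vs - 1)"
  by (induction vs rule: induct_list012) (auto simp: tval_def)

lemma path_time_in_Nats: "path_time \<omega> vs \<in> \<nat>"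
  by (induction vs rule: induct_list012) (auto simp: tval_def)

lemma lattice_walk_erase_loops:
  assumes "lattice_walk vs"
  shows "\<exists>ws. saw_path (hd vs) (last vs) ws \<and> path_time \<omega> ws \<le> path_time \<omega> vs"
  using assms
proof (induction vs rule: lattice_walk.induct)
  case (2 a)
  show ?case by (intro exI[of _ "[a]"]) (simp add: saw_path_iff)
next
  case (3 a b r)
  obtain ws where ws: "saw_path b (last (b # r)) ws" "path_time \<omega> ws \<le> path_time \<omega> (b # r)"
    using 3 by auto
  have le: "path_time \<omega> (b # r) \<le> path_time \<omega> (a # b # r)"
    by (simp add: tval_def)
  show ?case
  proof (cases "a \<in> set ws")
    case True
    then obtain xs ys where split: "ws = xs @ a # ys" by (meson split_list)
    have "saw_path a (last (a # b # r)) (a # ys)"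
      using ws(1) lattice_walk_append[of xs a ys] unfolding split saw_path_iff by simp
    moreover have "path_time \<omega> (a # ys) \<le> path_time \<omega> ws"
      using path_time_append[of \<omega> xs a ys] path_time_nonneg[of \<omega> "xs @ [a]"] by (simp add: split)
    ultimately show ?thesis
      using ws(2) le by fastforce
  next
    case False
    obtain ws' where ws': "ws = b # ws'"
      using ws(1) by (cases ws) (auto simp: saw_path_iff)
    have "saw_path a (last (a # b # r)) (a # ws)"
      using ws(1) False \<open>lattice_walk (a # b # r)\<close> unfolding saw_path_iff ws' by simp
    moreover have "path_time \<omega> (a # ws) \<le> path_time \<omega> (a # b # r)"
      using ws(2) by (simp add: ws')
    ultimately show ?thesis by fastforce
  qed
qed simp

definition l1_dist :: "'n::finite vertex \<Rightarrow> 'n vertex \<Rightarrow> int" where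
  "l1_dist u v = (\<Sum>i\<in>UNIV. \<bar>u $ i - v $ i\<bar>)"

lemma l1_dist_nonneg: "0 \<le> l1_dist u v"
  unfolding l1_dist_def by (simp add: sum_nonneg)

lemma l1_dist_eq_0_iff: "l1_dist u v = 0 \<longleftrightarrow> u = v"
  unfolding l1_dist_def by (subst sum_nonneg_eq_0_iff) (auto simp: vec_eq_iff)

lemma lattice_walk_straight:
  "\<exists>vs. lattice_walk vs \<and> hd vs = u \<and> last vs = v \<and> length vs = nat (l1_dist u v) + 1"
proof (induction "nat (l1_dist u v)" arbitrary: u)
  case 0
  then have "u = v" using l1_dist_eq_0_iff l1_dist_nonneg[of u v] by fastforce
  then show ?case by (intro exI[of _ "[u]"]) (simp add: l1_dist_def)
next
  case (Suc n)
  then have "u \<noteq> v" by (auto simp: l1_dist_def)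
  then obtain i where i: "u $ i \<noteq> v $ i" by (auto simp: vec_eq_iff)
  define w where "w = (\<chi> j. if j = i then u $ i + sgn (v $ i - u $ i) else u $ j)"
  have "\<bar>u $ j - w $ j\<bar> = (if j = i then 1 else 0)" for j
    using i by (auto simp: w_def sgn_if)
  then have "adj u w" unfolding adj_def by simp
  have "\<bar>w $ j - v $ j\<bar> = \<bar>u $ j - v $ j\<bar> - (if j = i then 1 else 0)" for j
    using i by (auto simp: w_def sgn_if)
  then have "l1_dist w v = l1_dist u v - 1"
    unfolding l1_dist_def by (simp add: sum_subtractf)
  then have "n = nat (l1_dist w v)" using Suc.hyps(2) by simp
  then obtain vs where vs: "lattice_walk vs" "hd vs = w" "last vs = v" "length vs = n + 1"
    using Suc.hyps(1) by metis
  moreover obtain vs' where "vs = w # vs'"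
    using vs(1,2) by (cases vs) auto
  ultimately have "lattice_walk (u # vs)" "hd (u # vs) = u" "last (u # vs) = v"
    "length (u # vs) = nat (l1_dist u v) + 1"
    using \<open>adj u w\<close> Suc.hyps(2) by simp_all
  then show ?case by blast
qed

lemma saw_path_time_le_l1_dist: "\<exists>vs. saw_path u v vs \<and> path_time \<omega> vs \<le> l1_dist u v"
proof -
  obtain vs where vs: "lattice_walk vs" "hd vs = u" "last vs = v" "length vs = nat (l1_dist u v) + 1"
    using lattice_walk_straight by blast
  moreover have "path_time \<omega> vs \<le> l1_dist u v"
    using path_time_le_length[of \<omega> vs] vs(4) l1_dist_nonneg[of u v] by simp
  ultimately show ?thesis
    using lattice_walk_erase_loops[OF vs(1), of \<omega>] by force
qed

definition vertex_time :: "'n::finite config \<Rightarrow> 'n vertex \<Rightarrow> 'n vertex \<Rightarrow> real" where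
  "vertex_time \<omega> u v = Inf (path_time \<omega> ` {vs. saw_path u v vs})"

lemma passage_time_eq_vertex_time: "passage_time \<omega> x y = vertex_time \<omega> (lat x) (lat y)"
  unfolding passage_time_def vertex_time_def ..

lemma vertex_time_le_path_time: "saw_path u v vs \<Longrightarrow> vertex_time \<omega> u v \<le> path_time \<omega> vs"
  unfolding vertex_time_def using path_time_nonneg
  by (intro cInf_lower bdd_belowI[of _ 0]) auto

lemma vertex_time_attained: "\<exists>vs. saw_path u v vs \<and> vertex_time \<omega> u v = path_time \<omega> vs"
proof -
  have "vertex_time \<omega> u v \<in> path_time \<omega> ` {vs. saw_path u v vs}"
    unfolding vertex_time_def using saw_path_time_le_l1_dist[of u v \<omega>] path_time_in_Nats
    by (intro Nats_Inf_mem) auto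
  then show ?thesis by auto
qed

lemma vertex_time_nonneg: "0 \<le> vertex_time \<omega> u v"
  using vertex_time_attained[of u v \<omega>] path_time_nonneg by metis

lemma vertex_time_le_l1_dist: "vertex_time \<omega> u v \<le> l1_dist u v"
  by (meson order_trans vertex_time_le_path_time saw_path_time_le_l1_dist)

lemma vertex_time_triangle: "vertex_time \<omega> u w \<le> vertex_time \<omega> u v + vertex_time \<omega> v w"
proof -
  obtain xs where xs: "saw_path u v xs" "vertex_time \<omega> u v = path_time \<omega> xs"
    using vertex_time_attained by blast
  obtain ys where ys: "saw_path v w ys" "vertex_time \<omega> v w = path_time \<omega> ys"
    using vertex_time_attained by blast
  obtain xs' where xs': "xs = xs' @ [v]"
    using xs(1) by (metis append_butlast_last_id saw_path_def)
  obtain ys' where ys': "ys = v # ys'"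
    using ys(1) by (metis list.collapse saw_path_def)
  have "lattice_walk (xs' @ v # ys')"
    using xs(1) ys(1) lattice_walk_append[of xs' v ys'] unfolding xs' ys' saw_path_iff by blast
  moreover have "hd (xs' @ v # ys') = u" "last (xs' @ v # ys') = w"
    using xs(1) ys(1) unfolding xs' ys' saw_path_def by (cases xs', auto)
  ultimately obtain zs where "saw_path u w zs" "path_time \<omega> zs \<le> path_time \<omega> (xs' @ v # ys')"
    using lattice_walk_erase_loops by metis
  then show ?thesis
    using vertex_time_le_path_time[of u w zs \<omega>] xs ys xs' ys' path_time_append[of \<omega> xs' v ys'] by simp
qed

lemma adj_in_lattice_edges: "adj a b \<Longrightarrow> {a, b} \<in> lattice_edges"
  unfolding lattice_edges_def by blast

lemma lattice_walk_edge_in_lattice_edges: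
  "lattice_walk vs \<Longrightarrow> i < length vs - 1 \<Longrightarrow> {vs ! i, vs ! (i + 1)} \<in> lattice_edges"
  by (simp add: lattice_walk_iff_adj_nth adj_in_lattice_edges)

section \<open>Measurability and translation invariance\<close>

lemma (in finite_measure) integrable_nonneg_bounded:
  fixes f :: "'a \<Rightarrow> real"
  assumes "f \<in> borel_measurable M" "\<And>x. 0 \<le> f x" "\<And>x. f x \<le> B"
  shows "integrable M f"
  by (rule integrable_const_bound[where B = B]) (use assms in auto)

lemma prob_space_FPP: "prob_space (FPP p)"
  unfolding FPP_def by (rule prob_space_PiM) (simp add: prob_space_measure_pmf)

lemma measurable_edge_state [measurable]:
  "e \<in> lattice_edges \<Longrightarrow> (\<lambda>\<omega>. \<omega> e) \<in> measurable (FPP p) (count_space UNIV)"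
  unfolding FPP_def
  using measurable_component_singleton[of e lattice_edges "\<lambda>_. measure_pmf (bernoulli_pmf p)"] by simp

lemma measurable_tval [measurable]:
  "e \<in> lattice_edges \<Longrightarrow> (\<lambda>\<omega>. tval \<omega> e) \<in> borel_measurable (FPP p)"
  unfolding tval_def by measurable

lemma measurable_path_time:
  "lattice_walk vs \<Longrightarrow> (\<lambda>\<omega>. path_time \<omega> vs) \<in> borel_measurable (FPP p)"
  unfolding path_time_def
  by (intro borel_measurable_sum measurable_tval lattice_walk_edge_in_lattice_edges) auto

lemma measurable_vertex_time [measurable]:
  "(\<lambda>\<omega>. vertex_time \<omega> u v) \<in> borel_measurable (FPP p)"
  unfolding vertex_time_def
  by (rule borel_measurable_cINF_real) (auto simp: saw_path_iff intro: measurable_path_time)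

lemma integrable_vertex_time: "integrable (FPP p) (\<lambda>\<omega>. vertex_time \<omega> u v)"
proof -
  interpret prob_space "FPP p" by (rule prob_space_FPP)
  show ?thesis
    by (rule integrable_nonneg_bounded[where B = "l1_dist u v"])
       (simp_all add: vertex_time_nonneg vertex_time_le_l1_dist)
qed

definition mean_vertex_time :: "real \<Rightarrow> 'n::finite vertex \<Rightarrow> 'n vertex \<Rightarrow> real" where
  "mean_vertex_time p u v = (\<integral>\<omega>. vertex_time \<omega> u v \<partial>FPP p)"

definition translate_config :: "'n::finite vertex \<Rightarrow> 'n config \<Rightarrow> 'n config" where
  "translate_config a \<omega> = (\<lambda>e\<in>lattice_edges. \<omega> ((\<lambda>x. x + a) ` e))"

lemma adj_translate [simp]: "adj (x + a) (y + a) \<longleftrightarrow> adj x y"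
  unfolding adj_def by simp

lemma translate_lattice_edge: "e \<in> lattice_edges \<Longrightarrow> (\<lambda>x. x + a) ` e \<in> lattice_edges"
  unfolding lattice_edges_def by force

lemma path_time_translate_config:
  "lattice_walk vs \<Longrightarrow> path_time (translate_config a \<omega>) vs = path_time \<omega> (map (\<lambda>x. x + a) vs)"
proof (induction vs rule: lattice_walk.induct)
  case (3 x y r)
  then have "{x, y} \<in> lattice_edges" by (simp add: adj_in_lattice_edges)
  then have "tval (translate_config a \<omega>) {x, y} = tval \<omega> {x + a, y + a}"
    unfolding translate_config_def tval_def by simp
  with 3 show ?case by simp
qed auto

lemma saw_path_translate:
  "saw_path (u + a) (v + a) (map (\<lambda>x. x + a) vs) \<longleftrightarrow> saw_path u v vs"
  unfolding saw_path_def by (auto simp: hd_map last_map distinct_map inj_on_def)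

lemma vertex_time_translate_config:
  "vertex_time (translate_config a \<omega>) u v = vertex_time \<omega> (u + a) (v + a)"
proof -
  have saws: "{ws. saw_path (u + a) (v + a) ws} = map (\<lambda>x. x + a) ` {vs. saw_path u v vs}"
  proof (intro set_eqI iffI)
    fix ws
    assume "ws \<in> {ws. saw_path (u + a) (v + a) ws}"
    moreover have "ws = map (\<lambda>x. x + a) (map (\<lambda>x. x - a) ws)" by (simp add: comp_def)
    ultimately show "ws \<in> map (\<lambda>x. x + a) ` {vs. saw_path u v vs}"
      by (metis (mono_tags, lifting) image_eqI mem_Collect_eq saw_path_translate)
  qed (auto simp: saw_path_translate)
  have "vertex_time (translate_config a \<omega>) u v =
        (INF vs\<in>{vs. saw_path u v vs}. path_time \<omega> (map (\<lambda>x. x + a) vs))"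
    unfolding vertex_time_def by (intro INF_cong refl) (simp add: saw_path_iff path_time_translate_config)
  also have "\<dots> = vertex_time \<omega> (u + a) (v + a)"
    unfolding vertex_time_def saws by (simp add: image_comp)
  finally show ?thesis .
qed

lemma measurable_translate_config: "translate_config a \<in> measurable (FPP p) (FPP p)"
proof -
  have "(\<lambda>\<omega>. \<lambda>e\<in>lattice_edges. \<omega> ((\<lambda>x. x + a) ` e)) \<in>
        measurable (FPP p) (PiM lattice_edges (\<lambda>_. measure_pmf (bernoulli_pmf p)))"
    using measurable_edge_state[OF translate_lattice_edge] by (intro measurable_restrict) simp
  then show ?thesis
    unfolding translate_config_def by (simp add: FPP_def)
qed

lemma distr_translate_config_FPP: "distr (FPP p) (FPP p) (translate_config a) = FPP p"
proof -
  have "inj_on (\<lambda>e. (\<lambda>x. x + a) ` e) lattice_edges"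
    by (rule inj_on_inverseI[where g = "\<lambda>e. (\<lambda>x. x - a) ` e"]) (auto simp: image_image)
  then show ?thesis
    unfolding FPP_def translate_config_def
    by (subst distr_PiM_reindex) (auto simp: prob_space_measure_pmf translate_lattice_edge)
qed

lemma mean_vertex_time_translate: "mean_vertex_time p (u + a) (v + a) = mean_vertex_time p u v"
proof -
  have "mean_vertex_time p u v = (\<integral>\<omega>. vertex_time \<omega> u v \<partial>distr (FPP p) (FPP p) (translate_config a))"
    unfolding mean_vertex_time_def distr_translate_config_FPP ..
  also have "\<dots> = (\<integral>\<omega>. vertex_time (translate_config a \<omega>) u v \<partial>FPP p)"
    by (rule integral_distr[OF measurable_translate_config measurable_vertex_time])
  finally show ?thesis
    unfolding mean_vertex_time_def vertex_time_translate_config by simp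
qed

section \<open>Coupling of Bernoulli product measures\<close>

lemma (in product_prob_space) nn_integral_PiM_prod:
  assumes J: "finite J" "J \<subseteq> I" and h: "\<And>j. j \<in> J \<Longrightarrow> h j \<in> borel_measurable (M j)"
  shows "(\<integral>\<^sup>+x. (\<Prod>j\<in>J. h j (x j)) \<partial>PiM I M) = (\<Prod>j\<in>J. \<integral>\<^sup>+y. h j y \<partial>M j)"
proof -
  have h_PiM: "(\<lambda>x. \<Prod>j\<in>J. h j (x j)) \<in> borel_measurable (PiM J M)"
    using h by measurable
  have "(\<integral>\<^sup>+x. (\<Prod>j\<in>J. h j (x j)) \<partial>PiM I M) = (\<integral>\<^sup>+x. (\<Prod>j\<in>J. h j (restrict x J j)) \<partial>PiM I M)"
    by (intro nn_integral_cong prod.cong) auto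
  also have "\<dots> = (\<integral>\<^sup>+x. (\<Prod>j\<in>J. h j (x j)) \<partial>distr (PiM I M) (PiM J M) (\<lambda>x. restrict x J))"
    by (rule nn_integral_distr[symmetric, OF measurable_restrict_subset[OF J(2)]]) (use h_PiM in simp)
  also have "\<dots> = (\<Prod>j\<in>J. \<integral>\<^sup>+y. h j y \<partial>M j)"
    using J h by (simp add: distr_PiM_restrict_finite product_nn_integral_prod)
  finally show ?thesis .
qed

lemma bernoulli_pmf_or:
  assumes "0 \<le> p" "p \<le> 1" "0 \<le> r" "r \<le> 1" and q: "q = p + (1 - p) * r"
  shows "bind_pmf (bernoulli_pmf p) (\<lambda>x. map_pmf (\<lambda>y. x \<or> y) (bernoulli_pmf r)) = bernoulli_pmf q"
proof (rule pmf_eqI)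
  fix b :: bool
  have "0 \<le> q" "q \<le> 1"
    using assms by (auto intro: mult_nonneg_nonneg) (smt (verit) mult_left_le)
  moreover have "Collect ((\<or>) True) = {False, True}" "Collect ((\<or>) False) = {True}" "Collect Not = {False}"
    by auto
  moreover have "measure_pmf.prob (bernoulli_pmf r) {False, True} = 1"
    using measure_pmf.prob_space[of "bernoulli_pmf r"] by (simp add: UNIV_bool)
  ultimately show "pmf (bind_pmf (bernoulli_pmf p) (\<lambda>x. map_pmf (\<lambda>y. x \<or> y) (bernoulli_pmf r))) b =
      pmf (bernoulli_pmf q) b"
    using assms by (cases b) (simp_all add: pmf_bind pmf_map integral_measure_pmf_real[where A=UNIV]
        UNIV_bool vimage_def measure_pmf_single algebra_simps)
qed

definition join_config :: "'n::finite config \<times> 'n config \<Rightarrow> 'n config" where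
  "join_config z = (\<lambda>e\<in>lattice_edges. fst z e \<or> snd z e)"

lemma measurable_join_config: "join_config \<in> measurable (FPP p \<Otimes>\<^sub>M FPP r) (FPP q)"
proof -
  have "(\<lambda>z. \<lambda>e\<in>lattice_edges. fst z e \<or> snd z e) \<in>
        measurable (FPP p \<Otimes>\<^sub>M FPP r) (PiM lattice_edges (\<lambda>_. measure_pmf (bernoulli_pmf q)))"
  proof (rule measurable_restrict)
    fix e :: "'n::finite edge"
    assume "e \<in> lattice_edges"
    then have [measurable]: "Measurable.pred (FPP p \<Otimes>\<^sub>M FPP r) (\<lambda>z. fst z e)"
      "Measurable.pred (FPP p \<Otimes>\<^sub>M FPP r) (\<lambda>z. snd z e)"
      by (simp_all add: pred_def measurable_compose[OF measurable_fst measurable_edge_state]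
          measurable_compose[OF measurable_snd measurable_edge_state])
    show "(\<lambda>z. fst z e \<or> snd z e) \<in> measurable (FPP p \<Otimes>\<^sub>M FPP r) (measure_pmf (bernoulli_pmf q))"
      by simp measurable
  qed
  then show ?thesis
    unfolding join_config_def by (simp add: FPP_def[of q])
qed

lemma distr_join_config_FPP:
  assumes p: "0 \<le> p" "p \<le> 1" and r: "0 \<le> r" "r \<le> 1" and q: "q = p + (1 - p) * r"
  shows "distr (FPP p \<Otimes>\<^sub>M FPP r) (FPP q) join_config = (FPP q :: 'n::finite config measure)"
proof -
  let ?B = "\<lambda>s. measure_pmf (bernoulli_pmf s)"
  interpret P: product_prob_space "\<lambda>_::'n edge. ?B p" lattice_edges
    by (rule product_prob_spaceI) (simp add: prob_space_measure_pmf)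
  interpret Q: product_prob_space "\<lambda>_::'n edge. ?B q" lattice_edges
    by (rule product_prob_spaceI) (simp add: prob_space_measure_pmf)
  interpret R: prob_space "FPP r :: 'n config measure" by (rule prob_space_FPP)
  have "distr (FPP p \<Otimes>\<^sub>M FPP r) (FPP q) join_config = (PiM lattice_edges (\<lambda>_. ?B q) :: 'n config measure)"
  proof (rule Q.PiM_eq)
    fix J :: "'n edge set" and F
    assume J: "finite J" "J \<subseteq> lattice_edges" and F: "\<And>j. j \<in> J \<Longrightarrow> F j \<in> sets (?B q)"
    let ?X = "prod_emb lattice_edges (\<lambda>_. ?B q) J (Pi\<^sub>E J F)"
    have X: "?X \<in> sets (FPP q)"
      unfolding FPP_def using J by (intro sets_PiM_I) auto
    have slice: "Pair \<omega> -` (join_config -` ?X \<inter> space (FPP p \<Otimes>\<^sub>M FPP r)) =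
        prod_emb lattice_edges (\<lambda>_. ?B r) J (Pi\<^sub>E J (\<lambda>j. {y. (\<omega> j \<or> y) \<in> F j}))"
      if "\<omega> \<in> space (FPP p)" for \<omega>
      using that J unfolding prod_emb_def join_config_def FPP_def
      by (auto simp: space_pair_measure space_PiM PiE_iff extensional_def subset_eq)
    have "emeasure (distr (FPP p \<Otimes>\<^sub>M FPP r) (FPP q) join_config) ?X =
          emeasure (FPP p \<Otimes>\<^sub>M FPP r) (join_config -` ?X \<inter> space (FPP p \<Otimes>\<^sub>M FPP r))"
      by (rule emeasure_distr[OF measurable_join_config X])
    also have "\<dots> = (\<integral>\<^sup>+\<omega>. emeasure (FPP r)
        (Pair \<omega> -` (join_config -` ?X \<inter> space (FPP p \<Otimes>\<^sub>M FPP r))) \<partial>FPP p)"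
      by (rule R.emeasure_pair_measure_alt) (rule measurable_sets[OF measurable_join_config X])
    also have "\<dots> = (\<integral>\<^sup>+\<omega>. (\<Prod>j\<in>J. emeasure (?B r) {y. (\<omega> j \<or> y) \<in> F j}) \<partial>FPP p)"
      using J by (intro nn_integral_cong)
        (simp only: slice, simp add: emeasure_PiM_emb prob_space_measure_pmf FPP_def)
    also have "\<dots> = (\<Prod>j\<in>J. \<integral>\<^sup>+x. emeasure (?B r) {y. (x \<or> y) \<in> F j} \<partial>?B p)"
      unfolding FPP_def using J by (intro P.nn_integral_PiM_prod) auto
    also have "\<dots> = (\<Prod>j\<in>J. emeasure (?B q) (F j))"
      by (simp add: bernoulli_pmf_or[OF p r q, symmetric] vimage_def)
    finally show "emeasure (distr (FPP p \<Otimes>\<^sub>M FPP r) (FPP q) join_config) ?X =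
        (\<Prod>j\<in>J. emeasure (?B q) (F j))" .
  qed (simp add: FPP_def)
  then show ?thesis by (simp add: FPP_def[of q])
qed

lemma integral_tval_FPP:
  assumes "e \<in> lattice_edges" "0 \<le> r" "r \<le> 1"
  shows "(\<integral>\<eta>. tval \<eta> e \<partial>FPP r) = 1 - r"
proof -
  let ?f = "\<lambda>b::bool. if b then 0 else 1 :: real"
  have "(\<integral>\<eta>. tval \<eta> e \<partial>FPP r) = (\<integral>b. ?f b \<partial>distr (FPP r) (measure_pmf (bernoulli_pmf r)) (\<lambda>\<eta>. \<eta> e))"
    unfolding tval_def using assms(1) by (intro integral_distr[symmetric]) simp_all
  also have "distr (FPP r) (measure_pmf (bernoulli_pmf r)) (\<lambda>\<eta>. \<eta> e) = measure_pmf (bernoulli_pmf r)"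
    unfolding FPP_def using assms(1) by (intro distr_PiM_component) (simp add: prob_space_measure_pmf)
  also have "(\<integral>b. ?f b \<partial>measure_pmf (bernoulli_pmf r)) = 1 - r"
    using assms(2,3) by (simp add: integral_measure_pmf_real[where A = UNIV] UNIV_bool)
  finally show ?thesis .
qed

lemma integral_path_time_join_config:
  assumes "lattice_walk vs" "0 \<le> r" "r \<le> 1"
  shows "(\<integral>\<eta>. path_time (join_config (\<omega>, \<eta>)) vs \<partial>FPP r) = (1 - r) * path_time \<omega> vs"
proof -
  interpret prob_space "FPP r" by (rule prob_space_FPP)
  let ?e = "\<lambda>i. {vs ! i, vs ! (i + 1)}"
  have e: "?e i \<in> lattice_edges" if "i < length vs - 1" for i
    using assms(1) that by (rule lattice_walk_edge_in_lattice_edges)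
  have integrable: "integrable (FPP r) (\<lambda>\<eta>. tval \<eta> (?e i))" if "i < length vs - 1" for i
    using e[OF that] by (intro integrable_nonneg_bounded[where B = 1]) (auto simp: tval_def)
  have "path_time (join_config (\<omega>, \<eta>)) vs = (\<Sum>i<length vs - 1. tval \<omega> (?e i) * tval \<eta> (?e i))" for \<eta>
    unfolding path_time_def using e by (intro sum.cong) (auto simp: tval_def join_config_def)
  then have "(\<integral>\<eta>. path_time (join_config (\<omega>, \<eta>)) vs \<partial>FPP r) =
        (\<Sum>i<length vs - 1. tval \<omega> (?e i) * (\<integral>\<eta>. tval \<eta> (?e i) \<partial>FPP r))"
    using integrable by (simp add: Bochner_Integration.integral_sum)
  also have "\<dots> = (1 - r) * path_time \<omega> vs"
    unfolding path_time_def sum_distrib_left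
    using e assms(2,3) by (intro sum.cong) (simp_all add: integral_tval_FPP)
  finally show ?thesis .
qed

lemma integral_vertex_time_join_le:
  fixes \<omega> :: "'n::finite config"
  assumes \<omega>: "\<omega> \<in> space (FPP p)" and r: "0 \<le> r" "r \<le> 1"
  shows "(\<integral>\<eta>. vertex_time (join_config (\<omega>, \<eta>)) u v \<partial>FPP r) \<le> (1 - r) * vertex_time \<omega> u v"
proof -
  interpret prob_space "FPP r :: 'n config measure" by (rule prob_space_FPP)
  obtain vs where vs: "saw_path u v vs" "vertex_time \<omega> u v = path_time \<omega> vs"
    using vertex_time_attained by blast
  then have walk: "lattice_walk vs"
    by (simp add: saw_path_iff)
  have join: "(\<lambda>\<eta>. join_config (\<omega>, \<eta>)) \<in> measurable (FPP r) (FPP p)"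
    using measurable_join_config \<omega> by (rule measurable_Pair2)
  have "(\<integral>\<eta>. vertex_time (join_config (\<omega>, \<eta>)) u v \<partial>FPP r) \<le>
        (\<integral>\<eta>. path_time (join_config (\<omega>, \<eta>)) vs \<partial>FPP r)"
  proof (rule integral_mono)
    show "integrable (FPP r) (\<lambda>\<eta>. vertex_time (join_config (\<omega>, \<eta>)) u v)"
      by (rule integrable_nonneg_bounded[where B = "l1_dist u v"])
        (simp_all add: measurable_compose[OF join measurable_vertex_time]
          vertex_time_nonneg vertex_time_le_l1_dist)
    show "integrable (FPP r) (\<lambda>\<eta>. path_time (join_config (\<omega>, \<eta>)) vs)"
      by (rule integrable_nonneg_bounded[where B = "real (length vs - 1)"])
        (simp_all add: measurable_compose[OF join measurable_path_time[OF walk]]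
          path_time_nonneg path_time_le_length[simplified])
    show "vertex_time (join_config (\<omega>, \<eta>)) u v \<le> path_time (join_config (\<omega>, \<eta>)) vs" for \<eta>
      using vs(1) by (rule vertex_time_le_path_time)
  qed
  also have "\<dots> = (1 - r) * vertex_time \<omega> u v"
    using vs(2) walk r by (simp add: integral_path_time_join_config)
  finally show ?thesis .
qed

lemma mean_vertex_time_join_le:
  fixes u v :: "'n::finite vertex"
  assumes p: "0 \<le> p" "p \<le> 1" and r: "0 \<le> r" "r \<le> 1" and q: "q = p + (1 - p) * r"
  shows "mean_vertex_time q u v \<le> (1 - r) * mean_vertex_time p u v"
proof -
  interpret P: prob_space "FPP p :: 'n config measure" by (rule prob_space_FPP)
  interpret R: prob_space "FPP r :: 'n config measure" by (rule prob_space_FPP)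
  interpret PR: pair_prob_space "FPP p :: 'n config measure" "FPP r :: 'n config measure"
    by unfold_locales
  have integrable: "integrable (FPP p \<Otimes>\<^sub>M FPP r) (\<lambda>z. vertex_time (join_config z) u v)"
    by (rule PR.integrable_nonneg_bounded[where B = "l1_dist u v"])
      (simp_all add: measurable_compose[OF measurable_join_config measurable_vertex_time]
        vertex_time_nonneg vertex_time_le_l1_dist)
  have "mean_vertex_time q u v = (\<integral>\<omega>. vertex_time \<omega> u v \<partial>distr (FPP p \<Otimes>\<^sub>M FPP r) (FPP q) join_config)"
    by (simp add: distr_join_config_FPP[OF p r q] mean_vertex_time_def)
  also have "\<dots> = (\<integral>z. vertex_time (join_config z) u v \<partial>(FPP p \<Otimes>\<^sub>M FPP r))"
    by (rule integral_distr[OF measurable_join_config measurable_vertex_time])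
  also have "\<dots> = (\<integral>\<omega>. (\<integral>\<eta>. vertex_time (join_config (\<omega>, \<eta>)) u v \<partial>FPP r) \<partial>FPP p)"
    by (rule PR.integral_fst'[OF integrable, symmetric])
  also have "\<dots> \<le> (\<integral>\<omega>. (1 - r) * vertex_time \<omega> u v \<partial>FPP p)"
    using PR.integrable_fst'[OF integrable] r
    by (intro integral_mono integral_vertex_time_join_le integrable_mult_right integrable_vertex_time) simp_all
  also have "\<dots> = (1 - r) * mean_vertex_time p u v"
    unfolding mean_vertex_time_def by simp
  finally show ?thesis .
qed

section \<open>The time constant\<close>

lemma subadditive_mult_add_le:
  fixes b :: "nat \<Rightarrow> real"
  assumes sub: "\<And>m n. b (m + n) \<le> b m + b n"
  shows "b (q * k + s) \<le> real q * b k + b s"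
proof (induction q)
  case (Suc q)
  have "b (Suc q * k + s) = b (k + (q * k + s))" by (simp add: algebra_simps)
  also have "\<dots> \<le> b k + b (q * k + s)" by (rule sub)
  finally show ?case using Suc by (simp add: algebra_simps)
qed simp

lemma subadditive_div_tendsto_Inf:
  fixes b :: "nat \<Rightarrow> real"
  assumes sub: "\<And>m n. b (m + n) \<le> b m + b n" and nonneg: "\<And>n. 0 \<le> b n"
  shows "(\<lambda>n. b n / real n) \<longlonglongrightarrow> (INF n\<in>{1..}. b n / real n)"
proof -
  let ?L = "INF n\<in>{1..}. b n / real n"
  have bdd: "bdd_below ((\<lambda>n. b n / real n) ` {1..})"
    using nonneg by (intro bdd_belowI[of _ 0]) auto
  show ?thesis
  proof (rule order_tendstoI)
    fix y
    assume "y < ?L"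
    moreover have "?L \<le> b n / real n" if "n \<ge> 1" for n
      using that bdd by (intro cINF_lower) auto
    ultimately show "eventually (\<lambda>n. y < b n / real n) sequentially"
      by (intro eventually_sequentiallyI[of 1]) (auto intro: less_le_trans)
  next
    fix y
    assume "?L < y"
    then obtain k where k: "k \<ge> 1" "b k / real k < y"
      using bdd by (auto simp: cINF_less_iff)
    define M where "M = (\<Sum>s<k. b s)"
    have "(\<lambda>n. M / real n) \<longlonglongrightarrow> 0" by (rule lim_const_over_n)
    then have small: "eventually (\<lambda>n. M / real n < y - b k / real k) sequentially"
      using k by (intro order_tendstoD(2)) auto
    have bound: "b n / real n \<le> b k / real k + M / real n" if "n \<ge> 1" for n
    proof -
      have "b n \<le> real (n div k) * b k + b (n mod k)"
        using subadditive_mult_add_le[OF sub, of "n div k" k "n mod k"] by simp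
      also have "b (n mod k) \<le> M"
        unfolding M_def using k nonneg by (intro member_le_sum) auto
      also have "real (n div k) * b k = real (n div k * k) * (b k / real k)"
        using k by simp
      also have "\<dots> \<le> real n * (b k / real k)"
        using nonneg[of k] by (intro mult_right_mono) (simp_all flip: of_nat_mult)
      finally show ?thesis
        using that by (simp add: field_simps)
    qed
    show "eventually (\<lambda>n. b n / real n < y) sequentially"
      using small eventually_ge_at_top[of 1]
      by eventually_elim (use bound in fastforce)
  qed
qed

lemma mean_vertex_time_triangle:
  "mean_vertex_time p u w \<le> mean_vertex_time p u v + mean_vertex_time p v w"
  unfolding mean_vertex_time_def
  by (subst Bochner_Integration.integral_add[symmetric])
     (auto intro!: integral_mono integrable_vertex_time vertex_time_triangle)

lemma mean_vertex_time_le_l1_dist: "mean_vertex_time p u v \<le> l1_dist u v"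
proof -
  interpret prob_space "FPP p" by (rule prob_space_FPP)
  show ?thesis
    unfolding mean_vertex_time_def
    by (intro integral_le_const integrable_vertex_time) (simp add: vertex_time_le_l1_dist)
qed

lemma mean_vertex_time_nonneg: "0 \<le> mean_vertex_time p u v"
  unfolding mean_vertex_time_def by (simp add: vertex_time_nonneg)

lemma l1_dist_lat_add_le:
  fixes x y :: "real ^ 'n::finite"
  shows "l1_dist (lat x + lat y) (lat (x + y)) \<le> int CARD('n)"
proof -
  have "l1_dist (lat x + lat y) (lat (x + y)) = (\<Sum>i\<in>UNIV. \<bar>\<lfloor>x $ i\<rfloor> + \<lfloor>y $ i\<rfloor> - \<lfloor>x $ i + y $ i\<rfloor>\<bar>)"
    unfolding l1_dist_def lat_def by simp
  also have "\<dots> \<le> (\<Sum>i\<in>(UNIV :: 'n set). 1)"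
    by (intro sum_mono) (simp add: floor_add)
  finally show ?thesis by simp
qed

lemma mean_vertex_time_lat_subadditive:
  fixes x :: "real ^ 'n::finite" and p :: real
  defines "E \<equiv> \<lambda>n::nat. mean_vertex_time p 0 (lat (real n *\<^sub>R x))"
  shows "E (m + n) \<le> E m + E n + CARD('n)"
proof -
  let ?L = "\<lambda>k::nat. lat (real k *\<^sub>R x)"
  have "E (m + n) \<le> E m + mean_vertex_time p (?L m) (?L m + ?L n) +
      mean_vertex_time p (?L m + ?L n) (?L (m + n))"
    unfolding E_def using mean_vertex_time_triangle by (smt (verit))
  also have "mean_vertex_time p (?L m) (?L m + ?L n) = E n"
    unfolding E_def using mean_vertex_time_translate[of p 0 "?L m" "?L n"] by (simp add: add.commute)
  also have "mean_vertex_time p (?L m + ?L n) (?L (m + n)) \<le> CARD('n)"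
    using mean_vertex_time_le_l1_dist l1_dist_lat_add_le[of "real m *\<^sub>R x" "real n *\<^sub>R x"]
    by (smt (verit) of_int_of_nat_eq of_int_le_iff of_nat_add scaleR_add_left)
  finally show ?thesis by simp
qed

lemma time_const_tendsto:
  fixes x :: "real ^ 'n::finite"
  shows "(\<lambda>n. mean_vertex_time p 0 (lat (real n *\<^sub>R x)) / real n) \<longlonglongrightarrow> time_const p x"
proof -
  define E where "E n = mean_vertex_time p 0 (lat (real n *\<^sub>R x))" for n
  \<comment> \<open>shifting by the constant \<open>CARD('n)\<close> makes \<open>E\<close> exactly subadditive\<close>
  define b where "b n = E n + CARD('n)" for n
  have "(\<lambda>n. b n / real n) \<longlonglongrightarrow> (INF n\<in>{1..}. b n / real n)"
  proof (rule subadditive_div_tendsto_Inf)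
    show "b (m + n) \<le> b m + b n" for m n
      using mean_vertex_time_lat_subadditive[where p = p and x = x and m = m and n = n]
      unfolding b_def E_def by simp
    show "0 \<le> b n" for n
      unfolding b_def E_def by (simp add: mean_vertex_time_nonneg add_nonneg_nonneg)
  qed
  then have "(\<lambda>n. b n / real n - CARD('n) / real n) \<longlonglongrightarrow> (INF n\<in>{1..}. b n / real n) - 0"
    by (intro tendsto_diff lim_const_over_n)
  moreover have "b n / real n - CARD('n) / real n = E n / real n" for n
    unfolding b_def by (simp add: diff_divide_distrib[symmetric])
  ultimately have "(\<lambda>n. E n / real n) \<longlonglongrightarrow> (INF n\<in>{1..}. b n / real n)"
    by simp
  moreover have "time_const p x = lim (\<lambda>n. E n / real n)"
    unfolding time_const_def E_def mean_vertex_time_def passage_time_eq_vertex_time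
    by (simp add: lat_def zero_vec_def)
  ultimately show ?thesis
    unfolding E_def by (simp add: limI)
qed

lemma time_const_nonneg: "0 \<le> time_const p x"
  by (rule tendsto_lowerbound[OF time_const_tendsto])
     (simp_all add: always_eventually mean_vertex_time_nonneg)

lemma time_const_join_le:
  assumes "0 \<le> p" "p \<le> 1" "0 \<le> r" "r \<le> 1"
  shows "time_const (p + (1 - p) * r) x \<le> (1 - r) * time_const p x"
  using assms
  by (intro LIMSEQ_le[OF time_const_tendsto tendsto_mult_left[OF time_const_tendsto]] always_eventually allI)
     (simp add: mean_vertex_time_join_le divide_right_mono)

lemma time_const_eq_0_if_ge_1:
  assumes "1 \<le> q"
  shows "time_const q x = 0"
proof -
  \<comment> \<open>\<open>bernoulli_pmf\<close> clips its parameter to \<open>[0, 1]\<close>\<close>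
  have "bernoulli_pmf q = bernoulli_pmf 1"
    using assms by (intro pmf_eqI) (simp add: bernoulli_pmf.rep_eq)
  then have "time_const q x = time_const (0 + (1 - 0) * 1) x"
    unfolding time_const_def FPP_def by simp
  also have "\<dots> \<le> 0"
    using time_const_join_le[of 0 1 x] by simp
  finally show ?thesis
    using time_const_nonneg[of q x] by simp
qed

theorem theorem1:
  fixes x :: "real ^ 'n::finite" and p q :: real
  assumes "CARD('n) \<ge> 2"
    and "0 \<le> p" and "p < q" and "q < p_crit TYPE('n)"
  shows "time_const p x - time_const q x \<ge> time_const q x / (1 - q) * (q - p)"
proof (cases "q < 1")
  case True
  define r where "r = (q - p) / (1 - p)"
  have "0 \<le> r" "r \<le> 1" "q = p + (1 - p) * r"
    using assms(2,3) True by (simp_all add: r_def field_simps)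
  then have "time_const q x \<le> (1 - r) * time_const p x"
    using assms(2,3) True time_const_join_le[of p r x] by simp
  moreover have "1 - r = (1 - q) / (1 - p)"
    using assms(2,3) True by (simp add: r_def field_simps)
  ultimately have "time_const q x * (1 - p) \<le> time_const p x * (1 - q)"
    using assms(2,3) True by (simp add: field_simps)
  then show ?thesis
    using assms(2,3) True by (simp add: field_simps)
next
  case False
  then show ?thesis
    using time_const_eq_0_if_ge_1[of q x] time_const_nonneg[of p x] by simp
qed

end
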